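(* Let $\mathfrak{g}=\mathfrak{W}\oplus\mathfrak{W}$ be the direct sum of two copies of the Witt algebra and let $\bigwedge^2\mathfrak{g}$ carry the $\mathfrak{g}$-module structure induced by the adjoint action. Then $$H^1\big(\mathfrak{W}\oplus\mathfrak{W},\textstyle\bigwedge^2(\mathfrak{W}\oplus\mathfrak{W})\big)=\{0\}.$$ Equivalently: for every linear map $\delta:\mathfrak{g}\to\bigwedge^2\mathfrak{g}$ satisfying $\delta([x,y])=x\cdot\delta(y)-y\cdot\delta(x)$ for all $x,y\in\mathfrak{g}$, there exists $r\in\bigwedge^2\mathfrak{g}$ with $\delta(x)=x\cdot r$ for all $x\in\mathfrak{g}$.
   Context: The Witt algebra $\mathfrak{W}$ is the complex Lie algebra with basis $\{L_m : m\in\mathbb{Z}\}$ and bracket $[L_m,L_n]=(m-n)L_{m+n}$. The algebra $\mathfrak{W}\oplus\mathfrak{W}$ has basis $\{L_m,\bar L_m: m\in\mathbb{Z}\}$ with $[L_m,L_n]=(m-n)L_{m+n}$, $[\bar L_m,\bar L_n]=(m-n)\bar L_{m+n}$, $[L_m,\bar L_n]=0$. For a Lie algebra $\mathfrak{g}$, $\bigwedge^2\mathfrak{g}$ (finite sums of $a\wedge b=a\otimes b-b\otimes a$) is a $\mathfrak{g}$-module via $x\cdot(a\wedge b)=[x,a]\wedge b+a\wedge[x,b]$. A 1-cocycle is a linear map $\delta:\mathfrak{g}\to\bigwedge^2\mathfrak{g}$ with $\delta([x,y])=x\cdot\delta(y)-y\cdot\delta(x)$; a 1-coboundary is a map $x\mapsto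 x\cdot r$ for fixed $r\in\bigwedge^2\mathfrak{g}$; $H^1$ is the quotient of cocycles by coboundaries. *)

theory Defs
  imports Complex_Main "HOL-Library.Function_Algebras"
begin

text \<open>Basis of W (+) W: index (b, m) with b :: bool the copy (False: L_m, True: Lbar_m).\<close>

type_synonym idx = "bool \<times> int"
type_synonym elt = "idx \<Rightarrow> complex"
type_synonym tens = "idx \<times> idx \<Rightarrow> complex"

definition supp :: "('a \<Rightarrow> complex) \<Rightarrow> 'a set" where
  "supp f = {i. f i \<noteq> 0}"

definition gW :: "elt set" where
  "gW = {x. finite (supp x)}"

definition basis_vec :: "idx \<Rightarrow> elt" where
  "basis_vec i = (\<lambda>k. if k = i then 1 else 0)"

definition br_basis :: "idx \<Rightarrow> idx \<Rightarrow> elt" where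
  "br_basis i j = (if fst i = fst j
     then (\<lambda>k. of_int (snd i - snd j) * basis_vec (fst i, snd i + snd j) k)
     else (\<lambda>k. 0))"

definition bracket :: "elt \<Rightarrow> elt \<Rightarrow> elt" where
  "bracket x y = (\<Sum>i\<in>supp x. \<Sum>j\<in>supp y. (\<lambda>k. x i * y j * br_basis i j k))"

definition tensor :: "elt \<Rightarrow> elt \<Rightarrow> tens" where
  "tensor a b = (\<lambda>(i, j). a i * b j)"

definition wedge :: "elt \<Rightarrow> elt \<Rightarrow> tens" where
  "wedge a b = tensor a b - tensor b a"

inductive_set Wedge2 :: "tens set" where
  zero: "0 \<in> Wedge2"
| add: "\<lbrakk>a \<in> gW; b \<in> gW; t \<in> Wedge2\<rbrakk> \<Longrightarrow> wedge a b + t \<in> Wedge2"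

text \<open>Action of g on g (x) g induced by the adjoint action:
  x.(a (x) b) = [x,a] (x) b + a (x) [x,b], extended linearly.\<close>
definition act :: "elt \<Rightarrow> tens \<Rightarrow> tens" where
  "act x t = (\<Sum>p\<in>supp t. (\<lambda>q. t p * (tensor (bracket x (basis_vec (fst p))) (basis_vec (snd p)) q
                                   + tensor (basis_vec (fst p)) (bracket x (basis_vec (snd p))) q)))"

definition is_cocycle :: "(elt \<Rightarrow> tens) \<Rightarrow> bool" where
  "is_cocycle \<delta> \<longleftrightarrow>
     (\<forall>x\<in>gW. \<delta> x \<in> Wedge2) \<and>
     (\<forall>x\<in>gW. \<forall>y\<in>gW. \<delta> (x + y) = \<delta> x + \<delta> y) \<and>
     (\<forall>c. \<forall>x\<in>gW. \<delta> (\<lambda>k. c * x k) = (\<lambda>q. c * \<delta> x q)) \<and>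
     (\<forall>x\<in>gW. \<forall>y\<in>gW. \<delta> (bracket x y) = act x (\<delta> y) - act y (\<delta> x))"

definition is_coboundary :: "(elt \<Rightarrow> tens) \<Rightarrow> bool" where
  "is_coboundary \<delta> \<longleftrightarrow> (\<exists>r\<in>Wedge2. \<forall>x\<in>gW. \<delta> x = act x r)"

end

theory Submission
  imports Defs
begin

text \<open>A cocycle \<open>\<delta>\<close> is determined by its values on basis vectors, and the cocycle identity for
  pairs of basis vectors splits along the four blocks \<open>W\<^sub>b\<^sub>1 \<otimes> W\<^sub>b\<^sub>2\<close> of \<open>g \<otimes> g\<close>. On a block
  \<open>W\<^sub>b \<otimes> W\<^sub>b\<close>, the copy \<open>W\<^sub>b\<close> gives a cocycle with values in \<open>W \<otimes> W\<close>: after subtracting a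
  coboundary it vanishes on \<open>L\<^sub>0\<close>, so its value on \<open>L\<^sub>m\<close> has degree \<open>m\<close>; on these degree slices
  the identities for \<open>[L\<^sub>1, L\<^sub>-\<^sub>1]\<close>, \<open>[L\<^sub>1, L\<^sub>-\<^sub>2]\<close>, \<open>[L\<^sub>-\<^sub>1, L\<^sub>2]\<close>, \<open>[L\<^sub>2, L\<^sub>-\<^sub>2]\<close> are recurrences
  forcing it to be a coboundary on the generators \<open>L\<^sub>\<plusminus>\<^sub>1, L\<^sub>\<plusminus>\<^sub>2\<close>, hence everywhere. On a
  mixed block the two copies act on different factors and weights alone produce a primitive. On a
  block of the other copy the action is trivial, and the cocycle vanishes because \<open>W = [W, W]\<close>.
  Gluing the four primitives and antisymmetrising gives \<open>r \<in> \<And>\<^sup>2 g\<close>.\<close>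

section \<open>Finitely supported functions and the basis of \<open>W \<oplus> W\<close>\<close>

lemma sum_apply: "(\<Sum>i\<in>S. f i) x = (\<Sum>i\<in>S. f i x)"
  by (induction S rule: infinite_finite_induct) auto

lemma sum_eq_single:
  assumes "finite S" and "\<And>p. p \<noteq> a \<Longrightarrow> h p = 0" and "a \<notin> S \<Longrightarrow> h a = 0"
  shows "(\<Sum>p\<in>S. h p) = h a"
proof -
  have "(\<Sum>p\<in>S. h p) = (\<Sum>p\<in>S. if p = a then h p else 0)"
    using assms(2) by (intro sum.cong) auto
  also have "\<dots> = h a" using assms(1,3) by simp
  finally show ?thesis .
qed

lemma supp_basis_vec: "supp (basis_vec i) = {i}"
  by (auto simp: supp_def basis_vec_def)

lemma basis_vec_in_gW: "basis_vec i \<in> gW"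
  by (simp add: gW_def supp_basis_vec)

lemma scaled_basis_vec_in_gW: "(\<lambda>k. c * basis_vec i k) \<in> gW"
proof -
  have "supp (\<lambda>k. c * basis_vec i k) \<subseteq> {i}" by (auto simp: supp_def basis_vec_def)
  then show ?thesis by (auto simp: gW_def intro: finite_subset)
qed

lemma gW_zero: "(0 :: elt) \<in> gW"
  by (simp add: gW_def supp_def)

lemma gW_add: "a \<in> gW \<Longrightarrow> b \<in> gW \<Longrightarrow> a + b \<in> gW"
proof -
  assume "a \<in> gW" "b \<in> gW"
  moreover have "supp (a + b) \<subseteq> supp a \<union> supp b" by (auto simp: supp_def)
  ultimately show ?thesis by (auto simp: gW_def intro: finite_subset)
qed

lemma gW_sum: "finite S \<Longrightarrow> (\<And>i. i \<in> S \<Longrightarrow> g i \<in> gW) \<Longrightarrow> (\<Sum>i\<in>S. g i) \<in> gW"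
  by (induction S rule: finite_induct) (auto intro: gW_add gW_zero)

lemma gW_basis_expansion: "x \<in> gW \<Longrightarrow> x = (\<Sum>i\<in>supp x. (\<lambda>k. x i * basis_vec i k))"
proof
  fix k assume "x \<in> gW"
  then have "(\<Sum>i\<in>supp x. x i * basis_vec i k) = x k * basis_vec k k"
    by (intro sum_eq_single) (auto simp: gW_def basis_vec_def supp_def)
  then show "x k = (\<Sum>i\<in>supp x. (\<lambda>k. x i * basis_vec i k)) k"
    by (simp add: sum_apply basis_vec_def)
qed

lemma bracket_basis_vec_right: "bracket x (basis_vec j) k = (\<Sum>i\<in>supp x. x i * br_basis i j k)"
  unfolding bracket_def sum_apply supp_basis_vec by (simp add: basis_vec_def)

lemma bracket_basis_vec: "bracket (basis_vec i) (basis_vec j) = br_basis i j"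
  by (rule ext) (simp only: bracket_basis_vec_right supp_basis_vec, simp add: basis_vec_def)

lemma Wedge2_finite_supp: "t \<in> Wedge2 \<Longrightarrow> finite (supp t)"
proof (induction rule: Wedge2.induct)
  case (add a b t)
  have "supp (wedge a b + t) \<subseteq> (supp a \<times> supp b) \<union> (supp b \<times> supp a) \<union> supp t"
    by (auto simp: supp_def wedge_def tensor_def)
  moreover have "finite ((supp a \<times> supp b) \<union> (supp b \<times> supp a) \<union> supp t)"
    using add by (simp add: gW_def)
  ultimately show ?case by (rule finite_subset)
qed (simp add: supp_def)

lemma Wedge2_antisym: "t \<in> Wedge2 \<Longrightarrow> t (p, q) = - t (q, p)"
proof (induction rule: Wedge2.induct)
  case (add a b t)
  then show ?case by (simp add: wedge_def tensor_def)
qed simp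

lemma Wedge2_sum:
  "finite S \<Longrightarrow> (\<And>s. s \<in> S \<Longrightarrow> a s \<in> gW \<and> b s \<in> gW) \<Longrightarrow> (\<Sum>s\<in>S. wedge (a s) (b s)) \<in> Wedge2"
proof (induction S rule: finite_induct)
  case (insert x F)
  then have "wedge (a x) (b x) + (\<Sum>s\<in>F. wedge (a s) (b s)) \<in> Wedge2" by (intro Wedge2.add) auto
  then show ?case by (simp only: sum.insert[OF insert(1,2)])
qed (simp add: Wedge2.zero)

lemma wedge_basis_vec_apply:
  "wedge (\<lambda>k. c * basis_vec p k) (basis_vec q) (x, y)
     = (if (p, q) = (x, y) then c else 0) - (if (p, q) = (y, x) then c else 0)"
  unfolding wedge_def tensor_def basis_vec_def
  by (cases "x = p"; cases "y = q"; cases "x = q"; cases "y = p") simp_all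

lemma antisym_in_Wedge2:
  assumes fin: "finite (supp t)" and antisym: "\<And>p q. t (p, q) = - t (q, p)"
  shows "t \<in> Wedge2"
proof -
  have "t = (\<Sum>pq\<in>supp t. wedge (\<lambda>k. t pq / 2 * basis_vec (fst pq) k) (basis_vec (snd pq)))"
  proof
    fix z :: "idx \<times> idx"
    obtain x y where z: "z = (x, y)" by (metis surj_pair)
    have "(\<Sum>pq\<in>supp t. wedge (\<lambda>k. t pq / 2 * basis_vec (fst pq) k) (basis_vec (snd pq))) z
        = (\<Sum>pq\<in>supp t. (if pq = (x, y) then t pq / 2 else 0) - (if pq = (y, x) then t pq / 2 else 0))"
      unfolding sum_apply z wedge_basis_vec_apply by simp
    also have "\<dots> = t (x, y) / 2 - t (y, x) / 2"
    proof -
      have "(\<Sum>pq\<in>supp t. if pq = a then t pq / 2 else 0) = t a / 2" for a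
        using fin by (simp add: supp_def)
      then show ?thesis by (simp only: sum_subtractf)
    qed
    also have "\<dots> = t z" using antisym[of x y] by (simp add: z)
    finally show "t z = (\<Sum>pq\<in>supp t. wedge (\<lambda>k. t pq / 2 * basis_vec (fst pq) k) (basis_vec (snd pq))) z"
      by simp
  qed
  also have "\<dots> \<in> Wedge2"
    by (rule Wedge2_sum[OF fin]) (blast intro: scaled_basis_vec_in_gW basis_vec_in_gW)
  finally show ?thesis .
qed

lemma antisymmetrization_in_Wedge2:
  assumes fin: "finite (supp t)"
  shows "(\<lambda>pq. (t pq - t (snd pq, fst pq)) / 2) \<in> Wedge2"
proof (rule antisym_in_Wedge2)
  show "finite (supp (\<lambda>pq. (t pq - t (snd pq, fst pq)) / 2))"
  proof (rule finite_subset)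
    show "supp (\<lambda>pq. (t pq - t (snd pq, fst pq)) / 2) \<subseteq> supp t \<union> (\<lambda>pq. (snd pq, fst pq)) ` supp t"
    proof
      fix pq assume "pq \<in> supp (\<lambda>pq. (t pq - t (snd pq, fst pq)) / 2)"
      then have "pq \<in> supp t \<or> (snd pq, fst pq) \<in> supp t" by (auto simp: supp_def)
      then show "pq \<in> supp t \<union> (\<lambda>pq. (snd pq, fst pq)) ` supp t"
        by (auto intro: image_eqI[of pq _ "(snd pq, fst pq)"])
    qed
  qed (simp add: fin)
qed (simp add: field_simps)

lemma finite_supp_add: "finite (supp f) \<Longrightarrow> finite (supp g) \<Longrightarrow> finite (supp (\<lambda>p. f p + g p))"
  by (rule finite_subset[of _ "supp f \<union> supp g"]) (auto simp: supp_def)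

lemma finite_supp_diff: "finite (supp f) \<Longrightarrow> finite (supp g) \<Longrightarrow> finite (supp (\<lambda>p. f p - g p))"
  by (rule finite_subset[of _ "supp f \<union> supp g"]) (auto simp: supp_def)

section \<open>Witt cocycles on the degree slices of \<open>W \<otimes> W\<close>\<close>

text \<open>\<open>f m\<close> is the value on \<open>L\<^sub>m\<close>, and \<open>A m n\<close> the action of \<open>L\<^sub>m\<close> on values of degree \<open>n\<close>.\<close>
definition witt_cocycle ::
    "(int \<Rightarrow> int \<Rightarrow> ('a \<Rightarrow> complex) \<Rightarrow> 'a \<Rightarrow> complex) \<Rightarrow> (int \<Rightarrow> 'a \<Rightarrow> complex) \<Rightarrow> bool" where
  "witt_cocycle A f \<longleftrightarrow>
     (\<forall>m n p. of_int (m - n) * f (m + n) p = A m n (f n) p - A n m (f m) p)"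

lemma witt_cocycleD:
  "witt_cocycle A f \<Longrightarrow> of_int (m - n) * f (m + n) p = A m n (f n) p - A n m (f m) p"
  unfolding witt_cocycle_def by blast

lemma witt_cocycle_diff:
  assumes lin: "\<And>m n f g p. A m n (\<lambda>q. f q - g q) p = A m n f p - A m n g p"
    and "witt_cocycle A f" and "witt_cocycle A g"
  shows "witt_cocycle A (\<lambda>m p. f m p - g m p)"
  unfolding witt_cocycle_def lin right_diff_distrib
  by (simp only: assms(2,3)[THEN witt_cocycleD]) (simp add: algebra_simps)

lemma witt_cocycle_trivial_action:
  assumes "witt_cocycle (\<lambda>_ _ _ _. 0) f"
  shows "f k = (\<lambda>p. 0)"
proof
  fix p
  define m n where "m = (if k = 2 then 3 else k - 1)" and "n = (if k = 2 then -1 else (1::int))"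
  have mn: "m + n = k" "m \<noteq> n" by (auto simp: m_def n_def)
  have "of_int (m - n) * f (m + n) p = 0" using witt_cocycleD[OF assms, of m n p] by simp
  moreover have "(of_int (m - n) :: complex) \<noteq> 0" using mn(2) by (subst of_int_eq_0_iff) simp
  ultimately show "f k p = 0" using mn(1) by simp
qed

text \<open>A tensor of degree \<open>n\<close> in \<open>W \<otimes> W\<close> is encoded by \<open>t x\<close>, the coefficient of
  \<open>L\<^sub>x \<otimes> L\<^sub>n\<^sub>-\<^sub>x\<close>; then \<open>slice_act m n t\<close> encodes \<open>L\<^sub>m \<cdot> t\<close>, of degree \<open>m + n\<close>.\<close>
definition slice_act :: "int \<Rightarrow> int \<Rightarrow> (int \<Rightarrow> complex) \<Rightarrow> int \<Rightarrow> complex" where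
  "slice_act m n t x = of_int (2*m - x) * t (x - m) + of_int (m - n + x) * t x"

lemma slice_act_diff: "slice_act m n (\<lambda>y. f y - g y) x = slice_act m n f x - slice_act m n g x"
  by (simp add: slice_act_def algebra_simps)

lemma slice_coboundary: "witt_cocycle slice_act (\<lambda>m. slice_act m 0 c)"
  unfolding witt_cocycle_def
proof (intro allI)
  fix m n x
  have "x - m - n = x - (m + n)" "(x::int) - n - m = x - (m + n)" by auto
  then show "of_int (m - n) * slice_act (m + n) 0 c x
      = slice_act m n (slice_act n 0 c) x - slice_act n m (slice_act m 0 c) x"
    unfolding slice_act_def by (simp add: algebra_simps)
qed

lemma witt_cocycle_slice_diff:
  "witt_cocycle slice_act f \<Longrightarrow> witt_cocycle slice_act (\<lambda>m x. f m x - slice_act m 0 c x)"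
  by (rule witt_cocycle_diff[OF slice_act_diff _ slice_coboundary])

text \<open>Solving \<open>slice_act 1 0 c = \<alpha>\<close> by recursion upward from \<open>x = 2\<close> and downward from
  \<open>x = -1\<close>, where the coefficients of \<open>c 1\<close> and \<open>c (-1)\<close> vanish; \<open>c (-1)\<close> is free and set to 0.\<close>
primrec L1_preimage_up :: "(int \<Rightarrow> complex) \<Rightarrow> nat \<Rightarrow> complex" where
  "L1_preimage_up \<alpha> 0 = \<alpha> 2 / 3"
| "L1_preimage_up \<alpha> (Suc k) = (\<alpha> (int k + 3) + of_int (int k + 1) * L1_preimage_up \<alpha> k) / of_int (int k + 4)"

primrec L1_preimage_down :: "(int \<Rightarrow> complex) \<Rightarrow> nat \<Rightarrow> complex" where
  "L1_preimage_down \<alpha> 0 = \<alpha> (-1) / 3"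
| "L1_preimage_down \<alpha> (Suc k) = (\<alpha> (- int k - 2) + of_int (int k + 1) * L1_preimage_down \<alpha> k) / of_int (int k + 4)"

definition L1_preimage :: "(int \<Rightarrow> complex) \<Rightarrow> int \<Rightarrow> complex" where
  "L1_preimage \<alpha> x =
     (if 2 \<le> x then L1_preimage_up \<alpha> (nat (x - 2))
      else if x \<le> -2 then L1_preimage_down \<alpha> (nat (-2 - x))
      else if x = -1 then 0 else if x = 0 then \<alpha> 0 else (\<alpha> 1 - \<alpha> 0) / 2)"

lemma slice_act_L1_preimage: "slice_act 1 0 (L1_preimage \<alpha>) x = \<alpha> x"
proof -
  consider "x \<ge> 3" | "x = 2" | "x = 1" | "x = 0" | "x = -1" | "x \<le> -2" by linarith
  then show ?thesis
  proof cases
    case 1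
    then obtain k where k: "x = int k + 3" by (metis add.commute zle_iff_zadd)
    have "L1_preimage \<alpha> x = L1_preimage_up \<alpha> (Suc k)"
      using k by (simp add: L1_preimage_def nat_add_distrib)
    moreover have "L1_preimage \<alpha> (x - 1) = L1_preimage_up \<alpha> k" using k by (simp add: L1_preimage_def)
    moreover have "(of_int (int k + 4) :: complex) \<noteq> 0" by (subst of_int_eq_0_iff) simp
    ultimately show ?thesis using k unfolding slice_act_def by (simp add: field_simps)
  next
    case 6
    then obtain k where k: "x = - int k - 2"
      by (metis add.commute diff_minus_eq_add minus_diff_eq neg_le_iff_le zle_iff_zadd)
    have "L1_preimage \<alpha> x = L1_preimage_down \<alpha> k" using k by (simp add: L1_preimage_def)
    moreover have "L1_preimage \<alpha> (x - 1) = L1_preimage_down \<alpha> (Suc k)"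
      using k by (simp add: L1_preimage_def nat_add_distrib)
    moreover have "(of_int (int k + 4) :: complex) \<noteq> 0" by (subst of_int_eq_0_iff) simp
    ultimately show ?thesis unfolding slice_act_def by (simp add: k field_simps)
  qed (simp_all add: slice_act_def L1_preimage_def field_simps)
qed

lemma vanish_upward:
  fixes f :: "int \<Rightarrow> 'a::zero"
  assumes "f x\<^sub>0 = 0" "\<And>x. x > x\<^sub>0 \<Longrightarrow> f (x - 1) = 0 \<Longrightarrow> f x = 0" "x \<ge> x\<^sub>0"
  shows "f x = 0"
  using assms(3)
proof (induction x rule: int_ge_induct)
  case (step i) then show ?case using assms(2)[of "i + 1"] by simp
qed (use assms(1) in simp)

lemma vanish_downward:
  fixes f :: "int \<Rightarrow> 'a::zero"
  assumes "f x\<^sub>0 = 0" "\<And>x. x < x\<^sub>0 \<Longrightarrow> f (x + 1) = 0 \<Longrightarrow> f x = 0" "x \<le> x\<^sub>0"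
  shows "f x = 0"
  using assms(3)
proof (induction x rule: int_le_induct)
  case (step i) then show ?case using assms(2)[of "i - 1"] by simp
qed (use assms(1) in simp)

lemma int_square_ne_24: "(x::int) * x \<noteq> 24"
proof
  assume sq: "x * x = 24"
  consider "\<bar>x\<bar> \<le> 4" | "\<bar>x\<bar> \<ge> 5" by linarith
  then show False
  proof cases
    case 1
    then have "\<bar>x\<bar> * \<bar>x\<bar> \<le> 4 * 4" by (meson abs_ge_zero mult_mono')
    then show False using sq by (simp add: abs_mult[symmetric])
  next
    case 2
    then have "\<bar>x\<bar> * \<bar>x\<bar> \<ge> 5 * 5" by (meson mult_mono' order.trans zero_le_numeral)
    then show False using sq by (simp add: abs_mult[symmetric])
  qed
qed

text \<open>The Casimir element \<open>L\<^sub>1 \<otimes> L\<^sub>-\<^sub>1 - 2 L\<^sub>0 \<otimes> L\<^sub>0 + L\<^sub>-\<^sub>1 \<otimes> L\<^sub>1\<close> of \<open>sl\<^sub>2\<close> in the degree 0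
  slice. It is killed by \<open>L\<^sub>1\<close> and \<open>L\<^sub>-\<^sub>1\<close> but not by \<open>L\<^sub>2\<close>, and accounts for the one free
  parameter of a cocycle vanishing on \<open>L\<^sub>0\<close> and \<open>L\<^sub>1\<close>.\<close>
definition casimir :: "int \<Rightarrow> complex" where
  "casimir x = (if x = -1 \<or> x = 1 then 1 else if x = 0 then -2 else 0)"

lemma slice_act_casimir_one: "slice_act 1 0 casimir x = 0"
proof -
  consider "x \<le> -2" | "x = -1" | "x = 0" | "x = 1" | "x = 2" | "x \<ge> 3" by linarith
  then show ?thesis by cases (auto simp: slice_act_def casimir_def)
qed

lemma slice_act_casimir_minus_one: "slice_act (-1) 0 casimir x = 0"
proof -
  consider "x \<le> -3" | "x = -2" | "x = -1" | "x = 0" | "x = 1" | "x \<ge> 2" by linarith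
  then show ?thesis by cases (auto simp: slice_act_def casimir_def)
qed

lemma slice_act_casimir_two:
  "slice_act 2 0 casimir x =
     (if x = -1 \<or> x = 3 then 1 else if x = 0 \<or> x = 2 then -4 else if x = 1 then 6 else 0)"
proof -
  consider "x \<le> -2" | "x = -1" | "x = 0" | "x = 1" | "x = 2" | "x = 3" | "x \<ge> 4" by linarith
  then show ?thesis by cases (auto simp: slice_act_def casimir_def)
qed

lemma slice_act_casimir_minus_two:
  "slice_act (-2) 0 casimir x =
     (if x = -3 \<or> x = 1 then -1 else if x = -2 \<or> x = 0 then 4 else if x = -1 then -6 else 0)"
proof -
  consider "x \<le> -4" | "x = -3" | "x = -2" | "x = -1" | "x = 0" | "x = 1" | "x \<ge> 2" by linarith
  then show ?thesis by cases (auto simp: slice_act_def casimir_def)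
qed

locale normalised_slice_cocycle =
  fixes e :: "int \<Rightarrow> int \<Rightarrow> complex"
  assumes cocycle: "witt_cocycle slice_act e"
    and at_zero: "e 0 = (\<lambda>x. 0)"
    and at_one: "e 1 = (\<lambda>x. 0)"
begin

lemma rel_minus_one: "of_int (2 - x) * e (-1) (x - 1) + of_int (2 + x) * e (-1) x = 0"
  using witt_cocycleD[OF cocycle, of 1 "-1" x] by (simp add: at_zero at_one slice_act_def)

lemma rel_minus_two: "of_int (2 - x) * e (-2) (x - 1) + of_int (3 + x) * e (-2) x = 3 * e (-1) x"
  using witt_cocycleD[OF cocycle, of 1 "-2" x] by (simp add: at_one slice_act_def)

lemma rel_two:
  "of_int (-2 - x) * e 2 (x + 1) + of_int (x - 3) * e 2 x
     = of_int (4 - x) * e (-1) (x - 2) + of_int (3 + x) * e (-1) x"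
  using witt_cocycleD[OF cocycle, of "-1" 2 x] by (simp add: at_one slice_act_def algebra_simps)

lemma rel_two_minus_two:
  "of_int (4 - x) * e (-2) (x - 2) + of_int (4 + x) * e (-2) x
     = of_int (-4 - x) * e 2 (x + 2) + of_int (x - 4) * e 2 x"
  using witt_cocycleD[OF cocycle, of 2 "-2" x] by (simp add: at_zero slice_act_def algebra_simps)

lemma minus_one_tail: "x \<ge> 2 \<or> x \<le> -3 \<Longrightarrow> e (-1) x = 0"
proof (elim disjE)
  show "e (-1) x = 0" if "x \<ge> 2"
  proof (rule vanish_upward[of "e (-1)" 2 x])
    show "e (-1) 2 = 0" using rel_minus_one[of 2] by simp
    show "e (-1) y = 0" if "y > 2" "e (-1) (y - 1) = 0" for y
      using rel_minus_one[of y] that by (simp del: of_int_add of_int_diff)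
  qed (use that in simp)
  show "e (-1) x = 0" if "x \<le> -3"
  proof (rule vanish_downward[of "e (-1)" "-3" x])
    show "e (-1) (-3) = 0" using rel_minus_one[of "-2"] by simp
    show "e (-1) y = 0" if "y < -3" "e (-1) (y + 1) = 0" for y
      using rel_minus_one[of "y + 1"] that by (simp del: of_int_add of_int_diff)
  qed (use that in simp)
qed

lemma minus_two_tail: "x \<ge> 2 \<or> x \<le> -4 \<Longrightarrow> e (-2) x = 0"
proof (elim disjE)
  show "e (-2) x = 0" if "x \<ge> 2"
  proof (rule vanish_upward[of "e (-2)" 2 x])
    show "e (-2) 2 = 0" using rel_minus_two[of 2] minus_one_tail[of 2] by simp
    show "e (-2) y = 0" if "y > 2" "e (-2) (y - 1) = 0" for y
      using rel_minus_two[of y] minus_one_tail[of y] that by (simp del: of_int_add of_int_diff)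
  qed (use that in simp)
  show "e (-2) x = 0" if "x \<le> -4"
  proof (rule vanish_downward[of "e (-2)" "-4" x])
    show "e (-2) (-4) = 0" using rel_minus_two[of "-3"] minus_one_tail[of "-3"] by simp
    show "e (-2) y = 0" if "y < -4" "e (-2) (y + 1) = 0" for y
      using rel_minus_two[of "y + 1"] minus_one_tail[of "y + 1"] that
      by (simp del: of_int_add of_int_diff)
  qed (use that in simp)
qed

text \<open>Outside \<open>[-3, 3]\<close> the relations for \<open>e 2\<close> at \<open>x\<close> and \<open>x + 1\<close>, together with the one
  coupling \<open>e 2\<close> and \<open>e (-2)\<close>, form a linear system in \<open>e 2 x, e 2 (x+1), e 2 (x+2)\<close> with
  determinant \<open>48 - 2 x\<^sup>2 \<noteq> 0\<close>.\<close>
lemma two_tail: "x \<ge> 4 \<or> x \<le> -4 \<Longrightarrow> e 2 x = 0"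
proof -
  assume x: "x \<ge> 4 \<or> x \<le> -4"
  define A B C where "A = e 2 x" and "B = e 2 (x + 1)" and "C = e 2 (x + 2)"
  have lower: "e (-1) (x - 2) = 0" "e (-1) x = 0" "e (-1) (x - 1) = 0" "e (-1) (x + 1) = 0"
      "e (-2) (x - 2) = 0" "e (-2) x = 0"
    using x minus_one_tail minus_two_tail by auto
  have h1: "of_int (-2 - x) * B + of_int (x - 3) * A = 0"
    using rel_two[of x] lower by (simp add: A_def B_def)
  have h2: "of_int (-3 - x) * C + of_int (x - 2) * B = 0"
    using rel_two[of "x + 1"] lower by (simp add: B_def C_def algebra_simps)
  have h3: "of_int (-4 - x) * C + of_int (x - 4) * A = 0"
    using rel_two_minus_two[of x] lower by (simp add: A_def C_def)
  have "of_int (48 - 2 * (x * x)) * A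
      = of_int ((x + 4) * (x - 2)) * (of_int (-2 - x) * B + of_int (x - 3) * A)
      + of_int ((x + 4) * (x + 2)) * (of_int (-3 - x) * C + of_int (x - 2) * B)
      - of_int ((x + 2) * (x + 3)) * (of_int (-4 - x) * C + of_int (x - 4) * A)"
    by (simp add: algebra_simps)
  also have "\<dots> = 0" using h1 h2 h3 by simp
  finally have "of_int (48 - 2 * (x * x)) * A = 0" .
  moreover have "48 - 2 * (x * x) \<noteq> 0" using int_square_ne_24[of x] by linarith
  ultimately show "e 2 x = 0" unfolding A_def by (metis mult_eq_0_iff of_int_eq_0_iff)
qed

lemma at_minus_one: "e (-1) = (\<lambda>x. 0)"
proof -
  have "e 2 (-3) = 0" using rel_two[of "-4"] two_tail[of "-4"] minus_one_tail[of "-6"] minus_one_tail[of "-4"]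
    by simp
  then have "e 2 (-2) = 0" using rel_two[of "-3"] minus_one_tail[of "-5"] minus_one_tail[of "-3"] by simp
  then have "e (-1) (-2) = 0" using rel_two[of "-2"] minus_one_tail[of "-4"] by simp
  then have "e (-1) (-1) = 0" using rel_minus_one[of "-1"] by simp
  then have "e (-1) 0 = 0" using rel_minus_one[of 0] by simp
  then have "e (-1) 1 = 0" using rel_minus_one[of 1] by simp
  have "e (-1) x = 0" for x
  proof -
    consider "x \<le> -3" | "x = -2" | "x = -1" | "x = 0" | "x = 1" | "x \<ge> 2" by linarith
    then show ?thesis by cases (use minus_one_tail \<open>e (-1) (-2) = 0\<close> \<open>e (-1) (-1) = 0\<close>
          \<open>e (-1) 0 = 0\<close> \<open>e (-1) 1 = 0\<close> in auto)
  qed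
  then show ?thesis by blast
qed

lemma generators_casimir:
  obtains p where "e 2 = (\<lambda>x. p * slice_act 2 0 casimir x)"
    and "e (-2) = (\<lambda>x. p * slice_act (-2) 0 casimir x)"
proof -
  note E = at_minus_one
  define p where "p = e 2 (-1)"
  define q where "q = e (-2) 1"
  have e2_0: "e 2 0 = -4 * p" using rel_two[of "-1"] by (simp add: E p_def algebra_simps; algebra)
  have e2_1: "e 2 1 = 6 * p" using rel_two[of 0] e2_0 by (simp add: E algebra_simps; algebra)
  have e2_2: "e 2 2 = -4 * p" using rel_two[of 1] e2_1 by (simp add: E algebra_simps; algebra)
  have e2_3: "e 2 3 = p" using rel_two[of 2] e2_2 by (simp add: E algebra_simps; algebra)
  have e2_m3: "e 2 (-3) = 0" using rel_two[of "-4"] two_tail[of "-4"] by (simp add: E)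
  have e2_m2: "e 2 (-2) = 0" using rel_two[of "-3"] e2_m3 by (simp add: E)
  have em2_0: "e (-2) 0 = -4 * q" using rel_minus_two[of 1] by (simp add: E q_def algebra_simps; algebra)
  have em2_m1: "e (-2) (-1) = 6 * q" using rel_minus_two[of 0] em2_0 by (simp add: E algebra_simps; algebra)
  have em2_m2: "e (-2) (-2) = -4 * q" using rel_minus_two[of "-1"] em2_m1 by (simp add: E algebra_simps; algebra)
  have em2_m3: "e (-2) (-3) = q" using rel_minus_two[of "-2"] em2_m2 by (simp add: E algebra_simps; algebra)
  have pq: "q = - p" using rel_two_minus_two[of 1] em2_m1 e2_3 e2_1 by (simp add: q_def algebra_simps; algebra)
  have em2_1: "e (-2) 1 = - p" using pq by (simp add: q_def)
  have "e 2 x = p * slice_act 2 0 casimir x" for x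
  proof -
    consider "x \<le> -4" | "x = -3" | "x = -2" | "x = -1" | "x = 0" | "x = 1" | "x = 2" | "x = 3"
      | "x \<ge> 4" by linarith
    then show ?thesis
      by cases (use two_tail e2_m3 e2_m2 e2_0 e2_1 e2_2 e2_3 in \<open>auto simp: slice_act_casimir_two p_def\<close>)
  qed
  moreover have "e (-2) x = p * slice_act (-2) 0 casimir x" for x
  proof -
    consider "x \<le> -4" | "x = -3" | "x = -2" | "x = -1" | "x = 0" | "x = 1" | "x \<ge> 2" by linarith
    then show ?thesis
      by cases (use minus_two_tail em2_m3 em2_m2 em2_m1 em2_0 em2_1 in \<open>auto simp: slice_act_casimir_minus_two pq\<close>)
  qed
  ultimately show thesis using that by blast
qed

end

lemma slice_cocycle_generated:
  assumes cocycle: "witt_cocycle slice_act e"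
    and gen: "e 1 = (\<lambda>x. 0)" "e (-1) = (\<lambda>x. 0)" "e 2 = (\<lambda>x. 0)" "e (-2) = (\<lambda>x. 0)"
  shows "e m x = 0"
proof -
  have up: "e m x = 0" if "m \<ge> 2" for m x
    using that
  proof (induction m arbitrary: x rule: int_ge_induct)
    case (step i)
    have "of_int (1 - i) * e (1 + i) x = 0"
      using witt_cocycleD[OF cocycle, of 1 i x] step gen(1) by (simp add: slice_act_def)
    moreover have "(of_int (1 - i) :: complex) \<noteq> 0" using step(1) by (subst of_int_eq_0_iff) simp
    ultimately show ?case by (simp add: add.commute)
  qed (simp add: gen)
  have down: "e m x = 0" if "m \<le> -2" for m x
    using that
  proof (induction m arbitrary: x rule: int_le_induct)
    case (step i)
    have "of_int (-1 - i) * e (-1 + i) x = 0"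
      using witt_cocycleD[OF cocycle, of "-1" i x] step gen(2) by (simp add: slice_act_def)
    moreover have "(of_int (-1 - i) :: complex) \<noteq> 0" using step(1) by (subst of_int_eq_0_iff) simp
    ultimately show ?case by simp
  qed (simp add: gen)
  have "e 0 x = 0"
    using witt_cocycleD[OF cocycle, of 1 "-1" x] gen(1,2) by (simp add: slice_act_def)
  moreover have "m \<le> -2 \<or> m \<in> {-1, 0, 1} \<or> m \<ge> 2" by auto
  ultimately show ?thesis using up down gen by auto
qed

lemma slice_cocycle_coboundary:
  assumes cocycle: "witt_cocycle slice_act d" and at_zero: "d 0 = (\<lambda>x. 0)"
  shows "\<exists>c. \<forall>m. d m = slice_act m 0 c"
proof -
  define c\<^sub>0 where "c\<^sub>0 = L1_preimage (d 1)"
  define e where "e m x = d m x - slice_act m 0 c\<^sub>0 x" for m x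
  have "normalised_slice_cocycle e"
  proof
    show "witt_cocycle slice_act e" unfolding e_def by (rule witt_cocycle_slice_diff[OF cocycle])
    show "e 0 = (\<lambda>x. 0)" by (simp add: fun_eq_iff e_def at_zero slice_act_def)
    show "e 1 = (\<lambda>x. 0)" by (simp add: fun_eq_iff e_def c\<^sub>0_def slice_act_L1_preimage)
  qed
  then interpret e: normalised_slice_cocycle e .
  obtain p where p: "e 2 = (\<lambda>x. p * slice_act 2 0 casimir x)"
      "e (-2) = (\<lambda>x. p * slice_act (-2) 0 casimir x)"
    by (rule e.generators_casimir)
  define e' where "e' m x = e m x - slice_act m 0 (\<lambda>x. p * casimir x) x" for m x
  have "e' m x = 0" for m x
  proof (rule slice_cocycle_generated)
    show "witt_cocycle slice_act e'" unfolding e'_def by (rule witt_cocycle_slice_diff[OF e.cocycle])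
    have scale: "slice_act m 0 (\<lambda>x. p * casimir x) x = p * slice_act m 0 casimir x" for m x
      by (simp add: slice_act_def algebra_simps)
    show "e' 1 = (\<lambda>x. 0)" "e' (-1) = (\<lambda>x. 0)" "e' 2 = (\<lambda>x. 0)" "e' (-2) = (\<lambda>x. 0)"
      by (simp_all add: fun_eq_iff e'_def scale p e.at_one e.at_minus_one slice_act_casimir_one
          slice_act_casimir_minus_one)
  qed
  then have "d m x = slice_act m 0 (\<lambda>x. c\<^sub>0 x + p * casimir x) x" for m x
    by (simp add: e'_def e_def slice_act_def algebra_simps)
  then have "d m = slice_act m 0 (\<lambda>x. c\<^sub>0 x + p * casimir x)" for m
    by (simp add: fun_eq_iff)
  then show ?thesis by blast
qed

lemma slice_coboundary_finite:
  assumes "finite (supp (slice_act 1 0 c))" and "finite (supp (slice_act 2 0 c))"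
  shows "finite (supp c)"
proof -
  have "c (x - 2) = 0"
    if "slice_act 1 0 c x = 0" "slice_act 1 0 c (x - 1) = 0" "slice_act 2 0 c x = 0" for x
  proof -
    define A B C where "A = c (x - 2)" and "B = c (x - 1)" and "C = c x"
    have e1: "of_int (2 - x) * B + of_int (1 + x) * C = 0"
      using that(1) by (simp add: slice_act_def B_def C_def)
    have e2: "of_int (3 - x) * A + of_int x * B = 0"
      using that(2) by (simp add: slice_act_def A_def B_def algebra_simps)
    have e3: "of_int (4 - x) * A + of_int (2 + x) * C = 0"
      using that(3) by (simp add: slice_act_def A_def C_def)
    have "12 * A = of_int (x * (1 + x)) * (of_int (4 - x) * A + of_int (2 + x) * C)
        - of_int ((2 + x) * x) * (of_int (2 - x) * B + of_int (1 + x) * C)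
        + of_int ((2 + x) * (2 - x)) * (of_int (3 - x) * A + of_int x * B)"
      by (simp add: algebra_simps)
    also have "\<dots> = 0" using e1 e2 e3 by simp
    finally show ?thesis unfolding A_def by simp
  qed
  then have "supp c \<subseteq> (\<lambda>x. x - 2) ` supp (slice_act 1 0 c) \<union> (\<lambda>x. x - 1) ` supp (slice_act 1 0 c)
      \<union> (\<lambda>x. x - 2) ` supp (slice_act 2 0 c)"
    unfolding supp_def by (force intro: image_eqI[where x = "_ + 2"] image_eqI[where x = "_ + 1"])
  then show ?thesis using assms by (auto intro: finite_subset)
qed

section \<open>Witt cocycles with values in \<open>W \<otimes> W\<close>\<close>

text \<open>Here \<open>t (a, b)\<close> is the coefficient of \<open>L\<^sub>a \<otimes> L\<^sub>b\<close>, and \<open>L\<^sub>m\<close> acts on one or both factors.\<close>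
definition act_left :: "int \<Rightarrow> (int \<times> int \<Rightarrow> complex) \<Rightarrow> int \<times> int \<Rightarrow> complex" where
  "act_left m t p = of_int (2*m - fst p) * t (fst p - m, snd p)"

definition act_right :: "int \<Rightarrow> (int \<times> int \<Rightarrow> complex) \<Rightarrow> int \<times> int \<Rightarrow> complex" where
  "act_right m t p = of_int (2*m - snd p) * t (fst p, snd p - m)"

definition act_both :: "int \<Rightarrow> (int \<times> int \<Rightarrow> complex) \<Rightarrow> int \<times> int \<Rightarrow> complex" where
  "act_both m t p = act_left m t p + act_right m t p"

lemma act_left_diff: "act_left m (\<lambda>q. f q - g q) p = act_left m f p - act_left m g p"
  by (simp add: act_left_def algebra_simps)

lemma act_right_diff: "act_right m (\<lambda>q. f q - g q) p = act_right m f p - act_right m g p"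
  by (simp add: act_right_def algebra_simps)

lemma act_both_add: "act_both m (\<lambda>q. f q + g q) p = act_both m f p + act_both m g p"
  by (simp add: act_both_def act_left_def act_right_def algebra_simps)

lemma act_both_diff: "act_both m (\<lambda>q. f q - g q) p = act_both m f p - act_both m g p"
  by (simp add: act_both_def act_left_diff act_right_diff)

lemma act_left_right_commute: "act_left m (act_right n r) p = act_right n (act_left m r) p"
  by (simp add: act_left_def act_right_def algebra_simps)

lemma act_both_zero: "act_both 0 t p = - of_int (fst p + snd p) * t p"
  by (simp add: act_both_def act_left_def act_right_def algebra_simps)

lemma left_coboundary: "witt_cocycle (\<lambda>m _. act_left m) (\<lambda>m. act_left m r)"
  unfolding witt_cocycle_def
proof (intro allI)
  fix m n :: int and p :: "int \<times> int"
  have "fst p - m - n = fst p - (m + n)" "fst p - n - m = fst p - (m + n)" by auto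
  then show "of_int (m - n) * act_left (m + n) r p
      = act_left m (act_left n r) p - act_left n (act_left m r) p"
    unfolding act_left_def by (simp add: algebra_simps)
qed

lemma right_coboundary: "witt_cocycle (\<lambda>m _. act_right m) (\<lambda>m. act_right m r)"
  unfolding witt_cocycle_def
proof (intro allI)
  fix m n :: int and p :: "int \<times> int"
  have "snd p - m - n = snd p - (m + n)" "snd p - n - m = snd p - (m + n)" by auto
  then show "of_int (m - n) * act_right (m + n) r p
      = act_right m (act_right n r) p - act_right n (act_right m r) p"
    unfolding act_right_def by (simp add: algebra_simps)
qed

lemma both_coboundary: "witt_cocycle (\<lambda>m _. act_both m) (\<lambda>m. act_both m r)"
  unfolding witt_cocycle_def
proof (intro allI)
  fix m n :: int and p :: "int \<times> int"
  have expand: "act_both k (act_both l r) p = act_left k (act_left l r) p + act_left k (act_right l r) p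
      + act_right k (act_left l r) p + act_right k (act_right l r) p" for k l
    by (simp add: act_both_def act_left_def act_right_def algebra_simps)
  have "act_both m (act_both n r) p - act_both n (act_both m r) p
      = (act_left m (act_left n r) p - act_left n (act_left m r) p)
        + (act_right m (act_right n r) p - act_right n (act_right m r) p)"
    by (simp add: expand act_left_right_commute)
  also have "\<dots> = of_int (m - n) * act_both (m + n) r p"
    unfolding left_coboundary[THEN witt_cocycleD, symmetric] right_coboundary[THEN witt_cocycleD, symmetric]
    by (simp add: act_both_def distrib_left)
  finally show "of_int (m - n) * act_both (m + n) r p
      = act_both m (act_both n r) p - act_both n (act_both m r) p" by simp
qed

lemma finite_supp_act_left: "finite (supp t) \<Longrightarrow> finite (supp (act_left m t))"
  by (rule finite_subset[of _ "(\<lambda>q. (fst q + m, snd q)) ` supp t"])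
    (force simp: supp_def act_left_def intro: image_eqI[where x = "(fst _ - m, snd _)"])+

lemma finite_supp_act_right: "finite (supp t) \<Longrightarrow> finite (supp (act_right m t))"
  by (rule finite_subset[of _ "(\<lambda>q. (fst q, snd q + m)) ` supp t"])
    (force simp: supp_def act_right_def intro: image_eqI[where x = "(fst _, snd _ - m)"])+

lemma finite_supp_act_both: "finite (supp t) \<Longrightarrow> finite (supp (act_both m t))"
  unfolding act_both_def[abs_def]
  by (intro finite_supp_add finite_supp_act_left finite_supp_act_right)

lemma act_both_homogeneous:
  assumes "\<And>q. fst q + snd q \<noteq> k \<Longrightarrow> t q = 0" and "fst p + snd p \<noteq> m + k"
  shows "act_both m t p = 0"
  using assms by (simp add: act_both_def act_left_def act_right_def)

lemma act_both_slice: "act_both m t (x, m + n - x) = slice_act m n (\<lambda>y. t (y, n - y)) x"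
proof -
  have "m + n - x = n - (x - m)" "m + n - x - m = n - x" by auto
  then show ?thesis by (simp only: act_both_def act_left_def act_right_def slice_act_def fst_conv snd_conv)
      (simp add: algebra_simps)
qed

lemma slice_of_both_cocycle:
  assumes "witt_cocycle (\<lambda>m _. act_both m) g"
  shows "witt_cocycle slice_act (\<lambda>m x. g m (x, m - x))"
  unfolding witt_cocycle_def
proof (intro allI)
  fix m n x
  show "of_int (m - n) * g (m + n) (x, m + n - x)
      = slice_act m n (\<lambda>y. g n (y, n - y)) x - slice_act n m (\<lambda>y. g m (y, m - y)) x"
    using witt_cocycleD[OF assms, of m n "(x, m + n - x)"] act_both_slice[of m "g n" x n]
      act_both_slice[of n "g m" x m] by (simp add: add.commute)
qed

lemma both_cocycle_act_on_zero:
  assumes "witt_cocycle (\<lambda>m _. act_both m) g"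
  shows "act_both m (g 0) p = of_int (m - (fst p + snd p)) * g m p"
  using witt_cocycleD[OF assms, of m 0 p] by (simp add: act_both_zero algebra_simps)

lemma invariant_finite_zero:
  assumes fin: "finite (supp t)" and inv: "\<And>m. act_both m t = (\<lambda>p. 0)"
  shows "t = (\<lambda>p. 0)"
proof
  fix p :: "int \<times> int"
  obtain a b where p: "p = (a, b)" by fastforce
  txt \<open>Evaluate \<open>act_both m t\<close> at \<open>(a + m, b)\<close> for an \<open>m\<close> pushing its second term off the support.\<close>
  have "finite ((\<lambda>q. fst q - a) ` supp t \<union> {a})" using fin by simp
  then obtain m where m: "m \<notin> (\<lambda>q. fst q - a) ` supp t \<union> {a}"
    using ex_new_if_finite infinite_UNIV_int by blast
  have "t (a + m, b - m) = 0"
    using m by (auto simp: supp_def intro: image_eqI[where x = "(a + m, b - m)"])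
  moreover have "act_both m t (a + m, b) = 0" using inv by simp
  ultimately have "of_int (m - a) * t (a, b) = 0" by (simp add: act_both_def act_left_def act_right_def)
  moreover have "(of_int (m - a) :: complex) \<noteq> 0" using m by (subst of_int_eq_0_iff) simp
  ultimately show "t p = 0" using p by simp
qed

lemma both_cocycle_homogeneous:
  assumes cocycle: "witt_cocycle (\<lambda>m _. act_both m) g" and fin: "finite (supp (g 0))"
    and degree_zero: "\<And>p. fst p + snd p \<noteq> 0 \<Longrightarrow> g 0 p = 0"
  shows "g 0 = (\<lambda>p. 0)" and "fst p + snd p \<noteq> m \<Longrightarrow> g m p = 0"
proof -
  have "act_both m (g 0) p = 0" for m p
    using both_cocycle_act_on_zero[OF cocycle, of m p] act_both_homogeneous[of 0 "g 0" p m] degree_zero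
    by (cases "fst p + snd p = m") auto
  then show g_zero: "g 0 = (\<lambda>p. 0)" by (intro invariant_finite_zero[OF fin]) (simp add: fun_eq_iff)
  assume "fst p + snd p \<noteq> m"
  then have "(of_int (m - (fst p + snd p)) :: complex) \<noteq> 0" by (subst of_int_eq_0_iff) simp
  moreover have "act_both m (g 0) p = 0" by (simp add: g_zero act_both_def act_left_def act_right_def)
  then have "of_int (m - (fst p + snd p)) * g m p = 0"
    by (simp only: both_cocycle_act_on_zero[OF cocycle])
  ultimately show "g m p = 0" by simp
qed

lemma homogeneous_both_cocycle_coboundary:
  assumes fin: "\<And>m. finite (supp (g m))" and cocycle: "witt_cocycle (\<lambda>m _. act_both m) g"
    and zero: "g 0 = (\<lambda>p. 0)" and degree: "\<And>m p. fst p + snd p \<noteq> m \<Longrightarrow> g m p = 0"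
  obtains r where "finite (supp r)" and "\<And>m. g m = act_both m r"
proof -
  define d where "d m x = g m (x, m - x)" for m x
  have fin_d: "finite (supp (d m))" for m
  proof (rule finite_subset)
    show "supp (d m) \<subseteq> fst ` supp (g m)"
      by (auto simp: supp_def d_def intro: image_eqI[where x = "(_, m - _)"])
  qed (simp add: fin)
  have "witt_cocycle slice_act d"
    using slice_of_both_cocycle[OF cocycle] by (simp add: d_def[abs_def])
  moreover have "d 0 = (\<lambda>x. 0)" by (simp add: d_def[abs_def] zero)
  ultimately obtain c where c: "\<And>m. d m = slice_act m 0 c" using slice_cocycle_coboundary by blast
  have fin_slice: "finite (supp (slice_act m 0 c))" for m using fin_d[of m] by (simp add: c)
  have fin_c: "finite (supp c)" by (rule slice_coboundary_finite[OF fin_slice fin_slice])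
  define r where "r p = (if fst p + snd p = 0 then c (fst p) else 0)" for p
  have fin_r: "finite (supp r)"
  proof (rule finite_subset)
    show "supp r \<subseteq> (\<lambda>x. (x, - x)) ` supp c"
    proof
      fix p assume "p \<in> supp r"
      then have "fst p + snd p = 0" "c (fst p) \<noteq> 0" by (auto simp: supp_def r_def split: if_splits)
      then show "p \<in> (\<lambda>x. (x, - x)) ` supp c"
        by (intro image_eqI[of _ _ "fst p"]) (auto simp: supp_def prod_eq_iff)
    qed
  qed (simp add: fin_c)
  have "act_both m r p = g m p" for m p
  proof (cases "fst p + snd p = m")
    case True
    define x where "x = fst p"
    have p: "p = (x, m + 0 - x)" using True by (simp add: x_def prod_eq_iff)
    have "(\<lambda>y. r (y, 0 - y)) = c" by (simp add: r_def fun_eq_iff)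
    then show ?thesis using c[of m] act_both_slice[of m r x 0] by (simp add: p d_def fun_eq_iff)
  next
    case False
    then show ?thesis using act_both_homogeneous[of 0 r p m] degree by (simp add: r_def)
  qed
  with fin_r show thesis by (intro that) auto
qed

lemma both_cocycle_coboundary:
  assumes fin: "\<And>m. finite (supp (f m))" and cocycle: "witt_cocycle (\<lambda>m _. act_both m) f"
  obtains r where "finite (supp r)" and "\<And>m. f m = act_both m r"
proof -
  txt \<open>\<open>L\<^sub>0\<close> acts on degree \<open>k\<close> by \<open>-k\<close>, so subtracting the coboundary of \<open>r\<^sub>0\<close> leaves a value
    on \<open>L\<^sub>0\<close> of degree 0.\<close>
  define r\<^sub>0 where "r\<^sub>0 p = (if fst p + snd p = 0 then 0 else - f 0 p / of_int (fst p + snd p))" for p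
  have fin_r\<^sub>0: "finite (supp r\<^sub>0)"
    by (rule finite_subset[OF _ fin[of 0]]) (auto simp: supp_def r\<^sub>0_def)
  define g where "g m p = f m p - act_both m r\<^sub>0 p" for m p
  have g_cocycle: "witt_cocycle (\<lambda>m _. act_both m) g"
    unfolding g_def by (rule witt_cocycle_diff[OF act_both_diff cocycle both_coboundary])
  have g_fin: "finite (supp (g m))" for m
    unfolding g_def by (intro finite_supp_diff fin finite_supp_act_both fin_r\<^sub>0)
  have "g 0 p = 0" if "fst p + snd p \<noteq> 0" for p
  proof -
    have "(of_int (fst p + snd p) :: complex) \<noteq> 0" using that by (subst of_int_eq_0_iff)
    then show ?thesis using that by (simp add: g_def act_both_zero r\<^sub>0_def field_simps del: of_int_add)
  qed
  note homogeneous = both_cocycle_homogeneous[OF g_cocycle g_fin this]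
  obtain r\<^sub>1 where fin_r\<^sub>1: "finite (supp r\<^sub>1)" and r\<^sub>1: "\<And>m. g m = act_both m r\<^sub>1"
    using homogeneous_both_cocycle_coboundary[OF g_fin g_cocycle homogeneous] by blast
  have "f m = act_both m (\<lambda>p. r\<^sub>0 p + r\<^sub>1 p)" for m
    using r\<^sub>1[of m] by (simp add: fun_eq_iff act_both_add g_def algebra_simps)
  with finite_supp_add[OF fin_r\<^sub>0 fin_r\<^sub>1] show thesis by (rule that)
qed

lemma mixed_cocycle_normalised_supp:
  assumes u: "witt_cocycle (\<lambda>m _. act_left m) u" and v: "witt_cocycle (\<lambda>m _. act_right m) v"
    and compat: "\<And>m n p. act_left m (v n) p = act_right n (u m) p"
    and u0: "u 0 = (\<lambda>p. 0)" and v0: "v 0 = (\<lambda>p. 0)"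
  shows "p \<noteq> (m, 0) \<Longrightarrow> u m p = 0" and "p \<noteq> (0, m) \<Longrightarrow> v m p = 0"
proof -
  show "u m p = 0" if "p \<noteq> (m, 0)"
  proof (cases "fst p = m")
    case True
    have "of_int (snd p) * u m p = 0" using compat[of m 0 p] by (simp add: v0 act_left_def act_right_def)
    moreover have "snd p \<noteq> 0" using True that by (auto simp: prod_eq_iff)
    ultimately show ?thesis by simp
  next
    case False
    have "of_int (m - fst p) * u m p = 0"
      using witt_cocycleD[OF u, of m 0 p] by (simp add: u0 act_left_def algebra_simps)
    moreover have "(of_int (m - fst p) :: complex) \<noteq> 0" using False by (subst of_int_eq_0_iff) simp
    ultimately show ?thesis by simp
  qed
  show "v m p = 0" if "p \<noteq> (0, m)"
  proof (cases "snd p = m")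
    case True
    have "of_int (fst p) * v m p = 0" using compat[of 0 m p] by (simp add: u0 act_left_def act_right_def)
    moreover have "fst p \<noteq> 0" using True that by (auto simp: prod_eq_iff)
    ultimately show ?thesis by simp
  next
    case False
    have "of_int (m - snd p) * v m p = 0"
      using witt_cocycleD[OF v, of m 0 p] by (simp add: v0 act_right_def algebra_simps)
    moreover have "(of_int (m - snd p) :: complex) \<noteq> 0" using False by (subst of_int_eq_0_iff) simp
    ultimately show ?thesis by simp
  qed
qed

lemma mixed_cocycle_normalised:
  assumes u: "witt_cocycle (\<lambda>m _. act_left m) u" and v: "witt_cocycle (\<lambda>m _. act_right m) v"
    and compat: "\<And>m n p. act_left m (v n) p = act_right n (u m) p"
    and u0: "u 0 = (\<lambda>p. 0)" and v0: "v 0 = (\<lambda>p. 0)"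
  defines "r \<equiv> (\<lambda>p. if p = (0, 0) then v 1 (0, 1) else 0)"
  shows "u m = act_left m r" and "v m = act_right m r"
proof -
  note u_supp = mixed_cocycle_normalised_supp(1)[OF u v compat u0 v0]
  note v_supp = mixed_cocycle_normalised_supp(2)[OF u v compat u0 v0]
  have cross: "of_int m * v n (0, n) = of_int n * u m (m, 0)" for m n
    using compat[of m n "(m, n)"] by (simp add: act_left_def act_right_def)
  have u_diag: "u m (m, 0) = of_int m * v 1 (0, 1)" for m using cross[of m 1] by simp
  have v_diag: "v n (0, n) = of_int n * v 1 (0, 1)" for n using cross[of 1 n] u_diag[of 1] by simp
  show "u m = act_left m r"
  proof
    fix p
    show "u m p = act_left m r p"
    proof (cases "p = (m, 0)")
      case True
      then show ?thesis using u_diag[of m] by (simp add: act_left_def r_def)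
    next
      case False
      then show ?thesis using u_supp[OF False] by (auto simp: act_left_def r_def prod_eq_iff)
    qed
  qed
  show "v m = act_right m r"
  proof
    fix p
    show "v m p = act_right m r p"
    proof (cases "p = (0, m)")
      case True
      then show ?thesis using v_diag[of m] by (simp add: act_right_def r_def)
    next
      case False
      then show ?thesis using v_supp[OF False] by (auto simp: act_right_def r_def prod_eq_iff)
    qed
  qed
qed

text \<open>\<open>L\<^sub>0\<close> acts on \<open>(a, b)\<close> by \<open>-a\<close> on the left and by \<open>-b\<close> on the right; at the origin the
  cocycle identity for \<open>[L\<^sub>1, L\<^sub>0]\<close> forces the value on \<open>L\<^sub>0\<close> to vanish.\<close>
lemma mixed_cocycle_at_zero:
  assumes u: "witt_cocycle (\<lambda>m _. act_left m) u" and v: "witt_cocycle (\<lambda>m _. act_right m) v"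
    and compat: "\<And>m n p. act_left m (v n) p = act_right n (u m) p"
  defines "r \<equiv> (\<lambda>p. if fst p \<noteq> 0 then - u 0 p / of_int (fst p)
      else if snd p \<noteq> 0 then - v 0 p / of_int (snd p) else 0)"
  shows "u 0 = act_left 0 r" and "v 0 = act_right 0 r"
proof -
  have weight_zero: "of_int (fst p) * v 0 p = of_int (snd p) * u 0 p" for p
    using compat[of 0 0 p] by (simp add: act_left_def act_right_def)
  have "u 0 (0, 0) = 0" using witt_cocycleD[OF u, of 1 0 "(1, 0)"] by (simp add: act_left_def)
  moreover have "v 0 (0, 0) = 0" using witt_cocycleD[OF v, of 1 0 "(0, 1)"] by (simp add: act_right_def)
  moreover have "u 0 (a, b) = act_left 0 r (a, b) \<and> v 0 (a, b) = act_right 0 r (a, b)"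
    if "(a, b) \<noteq> (0, 0)" for a b
  proof (cases "a = 0")
    case True
    then have "(of_int b :: complex) \<noteq> 0" using that by simp
    then show ?thesis using True weight_zero[of "(a, b)"]
      by (simp add: act_left_def act_right_def r_def field_simps)
  next
    case False
    then have "(of_int a :: complex) \<noteq> 0" by simp
    then show ?thesis using False weight_zero[of "(a, b)"]
      by (simp add: act_left_def act_right_def r_def field_simps)
  qed
  ultimately have "u 0 p = act_left 0 r p \<and> v 0 p = act_right 0 r p" for p
    by (cases p; cases "p = (0, 0)") (auto simp: act_left_def act_right_def)
  then show "u 0 = act_left 0 r" and "v 0 = act_right 0 r" by auto
qed

lemma mixed_cocycle_coboundary:
  assumes fin_u: "\<And>m. finite (supp (u m))" and fin_v: "\<And>m. finite (supp (v m))"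
    and u: "witt_cocycle (\<lambda>m _. act_left m) u" and v: "witt_cocycle (\<lambda>m _. act_right m) v"
    and compat: "\<And>m n p. act_left m (v n) p = act_right n (u m) p"
  obtains r where "finite (supp r)" and "\<And>m. u m = act_left m r" and "\<And>m. v m = act_right m r"
proof -
  define r\<^sub>0 where "r\<^sub>0 = (\<lambda>p. if fst p \<noteq> 0 then - u 0 p / of_int (fst p)
      else if snd p \<noteq> 0 then - v 0 p / of_int (snd p) else 0)"
  have fin_r\<^sub>0: "finite (supp r\<^sub>0)"
  proof (rule finite_subset)
    show "supp r\<^sub>0 \<subseteq> supp (u 0) \<union> supp (v 0)" by (auto simp: supp_def r\<^sub>0_def split: if_splits)
  qed (simp add: fin_u fin_v)
  define u' where "u' m p = u m p - act_left m r\<^sub>0 p" for m p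
  define v' where "v' m p = v m p - act_right m r\<^sub>0 p" for m p
  have u': "witt_cocycle (\<lambda>m _. act_left m) u'"
    unfolding u'_def by (rule witt_cocycle_diff[OF act_left_diff u left_coboundary])
  have v': "witt_cocycle (\<lambda>m _. act_right m) v'"
    unfolding v'_def by (rule witt_cocycle_diff[OF act_right_diff v right_coboundary])
  have compat': "act_left m (v' n) p = act_right n (u' m) p" for m n p
    using compat[of m n p] act_left_right_commute[of m n r\<^sub>0 p]
    unfolding u'_def[abs_def] v'_def[abs_def] by (simp add: act_left_diff act_right_diff)
  have "u' 0 = (\<lambda>p. 0)" "v' 0 = (\<lambda>p. 0)"
    using mixed_cocycle_at_zero[OF u v compat, folded r\<^sub>0_def] by (simp_all add: fun_eq_iff u'_def v'_def)
  note r\<^sub>1 = mixed_cocycle_normalised[OF u' v' compat' this]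
  define r\<^sub>1 :: "int \<times> int \<Rightarrow> complex" where "r\<^sub>1 = (\<lambda>p. if p = (0, 0) then v' 1 (0, 1) else 0)"
  have fin_r\<^sub>1: "finite (supp r\<^sub>1)"
    by (rule finite_subset[of _ "{(0, 0)}"]) (auto simp: supp_def r\<^sub>1_def)
  show thesis
  proof (rule that)
    show "finite (supp (\<lambda>p. r\<^sub>0 p + r\<^sub>1 p))" by (rule finite_supp_add[OF fin_r\<^sub>0 fin_r\<^sub>1])
    show "u m = act_left m (\<lambda>p. r\<^sub>0 p + r\<^sub>1 p)" "v m = act_right m (\<lambda>p. r\<^sub>0 p + r\<^sub>1 p)" for m
      using r\<^sub>1[of m, folded r\<^sub>1_def]
      by (simp_all add: fun_eq_iff u'_def v'_def act_left_def act_right_def algebra_simps)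
  qed
qed

section \<open>Cocycles of \<open>W \<oplus> W\<close>\<close>

definition basis_act :: "idx \<Rightarrow> tens \<Rightarrow> tens" where
  "basis_act i t q =
     (if fst (fst q) = fst i
      then of_int (2 * snd i - snd (fst q)) * t ((fst i, snd (fst q) - snd i), snd q) else 0)
   + (if fst (snd q) = fst i
      then of_int (2 * snd i - snd (snd q)) * t (fst q, (fst i, snd (snd q) - snd i)) else 0)"

lemma act_apply:
  "act x t q = (\<Sum>p\<in>supp t. t p * (bracket x (basis_vec (fst p)) (fst q) * basis_vec (snd p) (snd q)
      + basis_vec (fst p) (fst q) * bracket x (basis_vec (snd p)) (snd q)))"
  unfolding act_def sum_apply by (simp add: tensor_def case_prod_beta)

lemma act_basis_expansion:
  assumes "x \<in> gW"
  shows "act x t q = (\<Sum>i\<in>supp x. x i * act (basis_vec i) t q)"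
proof -
  have "act x t q = (\<Sum>p\<in>supp t. \<Sum>i\<in>supp x. x i * (t p * (br_basis i (fst p) (fst q) * basis_vec (snd p) (snd q)
          + basis_vec (fst p) (fst q) * br_basis i (snd p) (snd q))))"
    unfolding act_apply
    by (simp add: bracket_basis_vec_right sum_distrib_left sum_distrib_right sum.distrib algebra_simps)
  also have "\<dots> = (\<Sum>i\<in>supp x. x i * act (basis_vec i) t q)"
    unfolding act_apply bracket_basis_vec by (subst sum.swap) (simp add: sum_distrib_left)
  finally show ?thesis .
qed

lemma act_basis_vec:
  assumes fin: "finite (supp t)"
  shows "act (basis_vec i) t q = basis_act i t q"
proof -
  obtain b m where i: "i = (b, m)" by fastforce
  obtain b\<^sub>1 a\<^sub>1 b\<^sub>2 a\<^sub>2 where q: "q = ((b\<^sub>1, a\<^sub>1), (b\<^sub>2, a\<^sub>2))" by (metis prod.collapse)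
  define p\<^sub>1 where "p\<^sub>1 = ((b, a\<^sub>1 - m), (b\<^sub>2, a\<^sub>2))"
  define p\<^sub>2 where "p\<^sub>2 = ((b\<^sub>1, a\<^sub>1), (b, a\<^sub>2 - m))"
  have "act (basis_vec i) t q
      = (\<Sum>p\<in>supp t. t p * (br_basis i (fst p) (fst q) * basis_vec (snd p) (snd q)))
      + (\<Sum>p\<in>supp t. t p * (basis_vec (fst p) (fst q) * br_basis i (snd p) (snd q)))"
    unfolding act_apply bracket_basis_vec by (simp add: sum.distrib algebra_simps)
  also have "(\<Sum>p\<in>supp t. t p * (br_basis i (fst p) (fst q) * basis_vec (snd p) (snd q)))
      = t p\<^sub>1 * (br_basis i (fst p\<^sub>1) (fst q) * basis_vec (snd p\<^sub>1) (snd q))"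
    using fin
    by (rule sum_eq_single) (auto simp: p\<^sub>1_def i q br_basis_def basis_vec_def supp_def prod_eq_iff)
  also have "(\<Sum>p\<in>supp t. t p * (basis_vec (fst p) (fst q) * br_basis i (snd p) (snd q)))
      = t p\<^sub>2 * (basis_vec (fst p\<^sub>2) (fst q) * br_basis i (snd p\<^sub>2) (snd q))"
    using fin
    by (rule sum_eq_single) (auto simp: p\<^sub>2_def i q br_basis_def basis_vec_def supp_def prod_eq_iff)
  also have "t p\<^sub>1 * (br_basis i (fst p\<^sub>1) (fst q) * basis_vec (snd p\<^sub>1) (snd q))
      + t p\<^sub>2 * (basis_vec (fst p\<^sub>2) (fst q) * br_basis i (snd p\<^sub>2) (snd q)) = basis_act i t q"
    by (simp add: basis_act_def i q p\<^sub>1_def p\<^sub>2_def br_basis_def basis_vec_def algebra_simps)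
  finally show ?thesis .
qed

lemma is_cocycleD:
  assumes "is_cocycle \<delta>"
  shows is_cocycle_Wedge2: "\<And>x. x \<in> gW \<Longrightarrow> \<delta> x \<in> Wedge2"
    and is_cocycle_add: "\<And>x y. x \<in> gW \<Longrightarrow> y \<in> gW \<Longrightarrow> \<delta> (x + y) = \<delta> x + \<delta> y"
    and is_cocycle_scale: "\<And>c x. x \<in> gW \<Longrightarrow> \<delta> (\<lambda>k. c * x k) = (\<lambda>q. c * \<delta> x q)"
    and is_cocycle_bracket:
      "\<And>x y. x \<in> gW \<Longrightarrow> y \<in> gW \<Longrightarrow> \<delta> (bracket x y) = act x (\<delta> y) - act y (\<delta> x)"
  using assms unfolding is_cocycle_def by blast+

lemma is_cocycle_sum:
  assumes "is_cocycle \<delta>" and "finite S" and "\<And>i. i \<in> S \<Longrightarrow> g i \<in> gW"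
  shows "\<delta> (\<Sum>i\<in>S. g i) = (\<Sum>i\<in>S. \<delta> (g i))"
  using assms(2,3)
proof (induction S rule: finite_induct)
  case empty
  have "\<delta> (\<lambda>k. 0 * (0::elt) k) = (\<lambda>q. 0 * \<delta> 0 q)" by (rule is_cocycle_scale[OF assms(1) gW_zero])
  then show ?case by (simp add: zero_fun_def)
next
  case (insert x F)
  have "\<delta> (sum g (insert x F)) = \<delta> (g x + sum g F)" by (simp only: sum.insert[OF insert(1,2)])
  also have "\<dots> = \<delta> (g x) + \<delta> (sum g F)"
    using insert by (intro is_cocycle_add[OF assms(1)] gW_sum) auto
  also have "\<dots> = (\<Sum>i\<in>insert x F. \<delta> (g i))" using insert by (simp only: sum.insert[OF insert(1,2)]) simp
  finally show ?case .
qed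

lemma is_cocycle_basis_expansion:
  assumes "is_cocycle \<delta>" and x: "x \<in> gW"
  shows "\<delta> x q = (\<Sum>i\<in>supp x. x i * \<delta> (basis_vec i) q)"
proof -
  have fin: "finite (supp x)" using x by (simp add: gW_def)
  have "\<delta> x = \<delta> (\<Sum>i\<in>supp x. (\<lambda>k. x i * basis_vec i k))" using gW_basis_expansion[OF x] by simp
  also have "\<dots> = (\<Sum>i\<in>supp x. \<delta> (\<lambda>k. x i * basis_vec i k))"
    by (rule is_cocycle_sum[OF assms(1) fin]) (rule scaled_basis_vec_in_gW)
  also have "\<dots> = (\<Sum>i\<in>supp x. (\<lambda>q. x i * \<delta> (basis_vec i) q))"
    using is_cocycle_scale[OF assms(1) basis_vec_in_gW] by simp
  finally show ?thesis by (simp add: sum_apply)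
qed

lemma is_cocycle_basis_same:
  assumes "is_cocycle \<delta>"
  shows "of_int (m - n) * \<delta> (basis_vec (b, m + n)) q
     = basis_act (b, m) (\<delta> (basis_vec (b, n))) q - basis_act (b, n) (\<delta> (basis_vec (b, m))) q"
proof -
  have "bracket (basis_vec (b, m)) (basis_vec (b, n)) = (\<lambda>k. of_int (m - n) * basis_vec (b, m + n) k)"
    by (rule ext) (simp add: bracket_basis_vec br_basis_def)
  then have "(\<lambda>q. of_int (m - n) * \<delta> (basis_vec (b, m + n)) q)
      = act (basis_vec (b, m)) (\<delta> (basis_vec (b, n))) - act (basis_vec (b, n)) (\<delta> (basis_vec (b, m)))"
    using is_cocycle_bracket[OF assms basis_vec_in_gW basis_vec_in_gW, of "(b, m)" "(b, n)"]
    by (simp only: is_cocycle_scale[OF assms basis_vec_in_gW])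
  from fun_cong[OF this, of q]
  have "of_int (m - n) * \<delta> (basis_vec (b, m + n)) q
      = act (basis_vec (b, m)) (\<delta> (basis_vec (b, n))) q - act (basis_vec (b, n)) (\<delta> (basis_vec (b, m))) q"
    by simp
  then show ?thesis
    using is_cocycle_Wedge2[OF assms basis_vec_in_gW, THEN Wedge2_finite_supp] by (simp add: act_basis_vec)
qed

lemma is_cocycle_basis_cross:
  assumes "is_cocycle \<delta>" and "b \<noteq> b'"
  shows "basis_act (b, m) (\<delta> (basis_vec (b', n))) q = basis_act (b', n) (\<delta> (basis_vec (b, m))) q"
proof -
  have "bracket (basis_vec (b, m)) (basis_vec (b', n)) = (\<lambda>k. 0 * basis_vec (b, m) k)"
    by (rule ext) (simp add: bracket_basis_vec br_basis_def assms(2))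
  then have "(\<lambda>q. 0 * \<delta> (basis_vec (b, m)) q)
      = act (basis_vec (b, m)) (\<delta> (basis_vec (b', n))) - act (basis_vec (b', n)) (\<delta> (basis_vec (b, m)))"
    using is_cocycle_bracket[OF assms(1) basis_vec_in_gW basis_vec_in_gW, of "(b, m)" "(b', n)"]
    by (simp only: is_cocycle_scale[OF assms(1) basis_vec_in_gW])
  from fun_cong[OF this, of q]
  have "act (basis_vec (b, m)) (\<delta> (basis_vec (b', n))) q = act (basis_vec (b', n)) (\<delta> (basis_vec (b, m))) q"
    by simp
  then show ?thesis
    using is_cocycle_Wedge2[OF assms(1) basis_vec_in_gW, THEN Wedge2_finite_supp] by (simp add: act_basis_vec)
qed

definition block :: "bool \<Rightarrow> bool \<Rightarrow> tens \<Rightarrow> int \<times> int \<Rightarrow> complex" where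
  "block b\<^sub>1 b\<^sub>2 t p = t ((b\<^sub>1, fst p), (b\<^sub>2, snd p))"

definition block_act :: "bool \<Rightarrow> bool \<Rightarrow> bool \<Rightarrow> int \<Rightarrow> (int \<times> int \<Rightarrow> complex) \<Rightarrow> int \<times> int \<Rightarrow> complex" where
  "block_act b\<^sub>1 b\<^sub>2 b m r p = (if b\<^sub>1 = b then act_left m r p else 0) + (if b\<^sub>2 = b then act_right m r p else 0)"

definition glue_blocks :: "(bool \<Rightarrow> bool \<Rightarrow> int \<times> int \<Rightarrow> complex) \<Rightarrow> tens" where
  "glue_blocks R q = R (fst (fst q)) (fst (snd q)) (snd (fst q), snd (snd q))"

lemma block_basis_act: "block b\<^sub>1 b\<^sub>2 (basis_act (b, m) t) p = block_act b\<^sub>1 b\<^sub>2 b m (block b\<^sub>1 b\<^sub>2 t) p"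
  by (simp add: block_def block_act_def basis_act_def act_left_def act_right_def)

lemma block_glue_blocks: "block b\<^sub>1 b\<^sub>2 (glue_blocks R) = R b\<^sub>1 b\<^sub>2"
  by (simp add: block_def glue_blocks_def fun_eq_iff)

lemma tens_eqI_blocks:
  assumes "\<And>b\<^sub>1 b\<^sub>2 p. block b\<^sub>1 b\<^sub>2 s p = block b\<^sub>1 b\<^sub>2 t p"
  shows "s = t"
proof
  fix q :: "idx \<times> idx"
  obtain b\<^sub>1 a\<^sub>1 b\<^sub>2 a\<^sub>2 where "q = ((b\<^sub>1, a\<^sub>1), (b\<^sub>2, a\<^sub>2))" by (metis prod.collapse)
  then show "s q = t q" using assms[of b\<^sub>1 b\<^sub>2 "(a\<^sub>1, a\<^sub>2)"] by (simp add: block_def)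
qed

lemma finite_supp_block: "finite (supp t) \<Longrightarrow> finite (supp (block b\<^sub>1 b\<^sub>2 t))"
proof (rule finite_subset)
  show "supp (block b\<^sub>1 b\<^sub>2 t) \<subseteq> (\<lambda>q. (snd (fst q), snd (snd q))) ` supp t"
  proof
    fix p assume "p \<in> supp (block b\<^sub>1 b\<^sub>2 t)"
    then show "p \<in> (\<lambda>q. (snd (fst q), snd (snd q))) ` supp t"
      by (intro image_eqI[of _ _ "((b\<^sub>1, fst p), (b\<^sub>2, snd p))"]) (simp_all add: supp_def block_def)
  qed
qed simp

lemma finite_supp_glue_blocks:
  assumes "\<And>b\<^sub>1 b\<^sub>2. finite (supp (R b\<^sub>1 b\<^sub>2))"
  shows "finite (supp (glue_blocks R))"
proof (rule finite_subset)
  let ?S = "SIGMA b:UNIV. supp (R (fst b) (snd b))"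
  show "supp (glue_blocks R) \<subseteq> (\<lambda>(b, p). ((fst b, fst p), (snd b, snd p))) ` ?S"
  proof
    fix q assume "q \<in> supp (glue_blocks R)"
    then show "q \<in> (\<lambda>(b, p). ((fst b, fst p), (snd b, snd p))) ` ?S"
      by (intro image_eqI[of _ _ "((fst (fst q), fst (snd q)), (snd (fst q), snd (snd q)))"])
        (simp_all add: supp_def glue_blocks_def)
  qed
  show "finite ((\<lambda>(b, p). ((fst b, fst p), (snd b, snd p))) ` ?S)"
    using assms by (intro finite_imageI finite_SigmaI) simp_all
qed

lemma is_cocycle_block_same:
  assumes "is_cocycle \<delta>"
  shows "witt_cocycle (\<lambda>m _. block_act b\<^sub>1 b\<^sub>2 b m) (\<lambda>m. block b\<^sub>1 b\<^sub>2 (\<delta> (basis_vec (b, m))))"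
  unfolding witt_cocycle_def block_basis_act[symmetric] block_def
  using is_cocycle_basis_same[OF assms] by blast

lemma is_cocycle_block_cross:
  assumes "is_cocycle \<delta>" and "b \<noteq> b'"
  shows "block_act b\<^sub>1 b\<^sub>2 b m (block b\<^sub>1 b\<^sub>2 (\<delta> (basis_vec (b', n)))) p
       = block_act b\<^sub>1 b\<^sub>2 b' n (block b\<^sub>1 b\<^sub>2 (\<delta> (basis_vec (b, m)))) p"
  unfolding block_basis_act[symmetric]
  by (simp add: block_def is_cocycle_basis_cross[OF assms])

lemma finite_supp_cocycle_block:
  "is_cocycle \<delta> \<Longrightarrow> finite (supp (block b\<^sub>1 b\<^sub>2 (\<delta> (basis_vec i))))"
  by (intro finite_supp_block Wedge2_finite_supp is_cocycle_Wedge2 basis_vec_in_gW)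

lemma is_cocycle_diagonal_block_coboundary:
  assumes cocycle: "is_cocycle \<delta>"
  shows "\<exists>r. finite (supp r) \<and> (\<forall>b m. block b\<^sub>1 b\<^sub>1 (\<delta> (basis_vec (b, m))) = block_act b\<^sub>1 b\<^sub>1 b m r)"
proof -
  define D where "D b m = block b\<^sub>1 b\<^sub>1 (\<delta> (basis_vec (b, m)))" for b m
  have fin: "finite (supp (D b m))" for b m unfolding D_def by (rule finite_supp_cocycle_block[OF cocycle])
  have rel: "witt_cocycle (\<lambda>m _. block_act b\<^sub>1 b\<^sub>1 b m) (D b)" for b
    unfolding D_def[abs_def] by (rule is_cocycle_block_same[OF cocycle])
  have diag: "block_act b\<^sub>1 b\<^sub>1 b\<^sub>1 m = act_both m" for m
    by (simp add: block_act_def act_both_def fun_eq_iff)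
  then have "witt_cocycle (\<lambda>m _. act_both m) (D b\<^sub>1)" using rel[of b\<^sub>1] by simp
  then obtain r where r: "finite (supp r)" "\<And>m. D b\<^sub>1 m = act_both m r"
    using both_cocycle_coboundary[of "D b\<^sub>1"] fin by blast
  have "block_act b\<^sub>1 b\<^sub>1 b m = (\<lambda>_ _. 0)" if "b \<noteq> b\<^sub>1" for b m
    using that by (simp add: block_act_def fun_eq_iff)
  then have other: "D b m = block_act b\<^sub>1 b\<^sub>1 b m r" if "b \<noteq> b\<^sub>1" for b m
    using witt_cocycle_trivial_action[of "D b"] rel[of b] that by simp
  have "block b\<^sub>1 b\<^sub>1 (\<delta> (basis_vec (b, m))) = block_act b\<^sub>1 b\<^sub>1 b m r" for b m
    using r(2)[of m] other[of b m] by (cases "b = b\<^sub>1") (simp_all add: D_def diag)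
  with r(1) show ?thesis by blast
qed

lemma is_cocycle_mixed_block_coboundary:
  assumes cocycle: "is_cocycle \<delta>" and distinct: "b\<^sub>1 \<noteq> b\<^sub>2"
  shows "\<exists>r. finite (supp r) \<and> (\<forall>b m. block b\<^sub>1 b\<^sub>2 (\<delta> (basis_vec (b, m))) = block_act b\<^sub>1 b\<^sub>2 b m r)"
proof -
  define D where "D b m = block b\<^sub>1 b\<^sub>2 (\<delta> (basis_vec (b, m)))" for b m
  have fin: "finite (supp (D b m))" for b m unfolding D_def by (rule finite_supp_cocycle_block[OF cocycle])
  have left: "block_act b\<^sub>1 b\<^sub>2 b\<^sub>1 m = act_left m" and right: "block_act b\<^sub>1 b\<^sub>2 b\<^sub>2 m = act_right m" for m
    using distinct by (simp_all add: block_act_def fun_eq_iff)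
  have "witt_cocycle (\<lambda>m _. act_left m) (D b\<^sub>1)" "witt_cocycle (\<lambda>m _. act_right m) (D b\<^sub>2)"
    using is_cocycle_block_same[OF cocycle] by (simp_all add: D_def[abs_def] flip: left right)
  moreover have "act_left m (D b\<^sub>2 n) p = act_right n (D b\<^sub>1 m) p" for m n p
    using is_cocycle_block_cross[OF cocycle distinct, of b\<^sub>1 b\<^sub>2 m n p] distinct
    by (simp add: D_def block_act_def)
  ultimately obtain r where r: "finite (supp r)" "\<And>m. D b\<^sub>1 m = act_left m r" "\<And>m. D b\<^sub>2 m = act_right m r"
    using mixed_cocycle_coboundary[of "D b\<^sub>1" "D b\<^sub>2"] fin by blast
  have "block b\<^sub>1 b\<^sub>2 (\<delta> (basis_vec (b, m))) = block_act b\<^sub>1 b\<^sub>2 b m r" for b m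
  proof -
    have "b = b\<^sub>1 \<or> b = b\<^sub>2" using distinct by blast
    then show ?thesis using r(2,3) left right by (auto simp: D_def)
  qed
  with r(1) show ?thesis by blast
qed

lemma is_cocycle_block_coboundary:
  assumes "is_cocycle \<delta>"
  shows "\<exists>r. finite (supp r) \<and> (\<forall>b m. block b\<^sub>1 b\<^sub>2 (\<delta> (basis_vec (b, m))) = block_act b\<^sub>1 b\<^sub>2 b m r)"
proof (cases "b\<^sub>1 = b\<^sub>2")
  case True
  then show ?thesis using is_cocycle_diagonal_block_coboundary[OF assms, of b\<^sub>1] by simp
next
  case False
  then show ?thesis by (rule is_cocycle_mixed_block_coboundary[OF assms])
qed

lemma basis_act_antisymmetrize:
  "basis_act i (\<lambda>pq. (t pq - t (snd pq, fst pq)) / 2) q = (basis_act i t q - basis_act i t (snd q, fst q)) / 2"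
  by (simp add: basis_act_def field_simps)

lemma is_cocycle_basis_coboundary:
  assumes cocycle: "is_cocycle \<delta>"
  obtains r where "r \<in> Wedge2" and "\<And>i. \<delta> (basis_vec i) = basis_act i r"
proof -
  obtain R where fin_R: "\<And>b\<^sub>1 b\<^sub>2. finite (supp (R b\<^sub>1 b\<^sub>2))"
    and R: "\<And>b\<^sub>1 b\<^sub>2 b m. block b\<^sub>1 b\<^sub>2 (\<delta> (basis_vec (b, m))) = block_act b\<^sub>1 b\<^sub>2 b m (R b\<^sub>1 b\<^sub>2)"
    using is_cocycle_block_coboundary[OF cocycle] by metis
  define t where "t = glue_blocks R"
  have fin_t: "finite (supp t)" unfolding t_def by (rule finite_supp_glue_blocks[OF fin_R])
  have t: "\<delta> (basis_vec (b, m)) = basis_act (b, m) t" for b m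
    by (rule tens_eqI_blocks) (simp add: block_basis_act t_def block_glue_blocks R)
  define r where "r pq = (t pq - t (snd pq, fst pq)) / 2" for pq
  have "r \<in> Wedge2" unfolding r_def by (rule antisymmetrization_in_Wedge2[OF fin_t])
  moreover have "\<delta> (basis_vec i) = basis_act i r" for i
  proof
    fix q
    obtain b m where i: "i = (b, m)" by fastforce
    have "\<delta> (basis_vec i) \<in> Wedge2" by (rule is_cocycle_Wedge2[OF cocycle basis_vec_in_gW])
    then have "\<delta> (basis_vec i) (snd q, fst q) = - \<delta> (basis_vec i) q"
      using Wedge2_antisym[of _ "snd q" "fst q"] by simp
    then show "\<delta> (basis_vec i) q = basis_act i r q"
      unfolding r_def[abs_def] basis_act_antisymmetrize using t[of b m] by (simp add: i)
  qed
  ultimately show thesis by (rule that)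
qed

theorem theorem2:
  fixes \<delta> :: "elt \<Rightarrow> tens"
  assumes "is_cocycle \<delta>"
  shows "is_coboundary \<delta>"
proof -
  obtain r where r: "r \<in> Wedge2" and basis: "\<And>i. \<delta> (basis_vec i) = basis_act i r"
    using is_cocycle_basis_coboundary[OF assms] by blast
  have "\<delta> x = act x r" if x: "x \<in> gW" for x
  proof
    fix q
    have "\<delta> x q = (\<Sum>i\<in>supp x. x i * \<delta> (basis_vec i) q)"
      by (rule is_cocycle_basis_expansion[OF assms x])
    also have "\<dots> = (\<Sum>i\<in>supp x. x i * act (basis_vec i) r q)"
      by (simp add: basis act_basis_vec[OF Wedge2_finite_supp[OF r]])
    also have "\<dots> = act x r q" by (rule act_basis_expansion[OF x, symmetric])
    finally show "\<delta> x q = act x r q" .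
  qed
  with r show ?thesis unfolding is_coboundary_def by blast
qed

end
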